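(* Let $(\mathcal S,\gamma)$ be an IFS quasiarc with similarity dimension $s$, and let $\phi:[0,1]\to\gamma$ be its Hutchinson parameterization. Then for all $u,v\in[0,1]$ with $u\le v$, $$\mathcal H^s(\phi([u,v]))=\mathcal H^s(\gamma)\,|u-v|,$$ where $\mathcal H^s$ is $s$-dimensional Hausdorff measure.
   Context: $\mathcal S=\{S_1,\dots,S_N\}$, $N\ge2$, contracting similarities of $\mathbb{R}^n$ with ratios $r_i\in(0,1)$, invariant set $\gamma$ (unique nonempty compact set with $\gamma=\bigcup_iS_i(\gamma)$). IFS path: there are $a,b$ with $S_1(a)=a$, $S_N(b)=b$, $S_i(b)=S_{i+1}(a)$ for $i=1,\dots,N-1$. IFS arc: moreover $S_i(\gamma)\cap S_{i+1}(\gamma)=\{S_{i+1}(a)\}$ and $S_i(\gamma)\cap S_j(\gamma)=\emptyset$ for $i,j\in\{1,\dots,N\}$, $|i-j|>1$. IFS quasiarc: moreover $\gamma$ is quasisymmetrically equivalent to $[0,1]$. Similarity dimension: $s>0$ with $\sum_ir_i^s=1$. Hutchinson parameterization: $t_0=0$, $t_i=t_{i-1}+r_i^s$, $s_i(t)=t\,t_i+(1-t)t_{i-1}$; $S_\sigma=S_{\sigma_1}\circ\cdots\circ S_{\sigma_k}$, $s_\sigma$ likewise; $\phi_0(t)=a+t(b-a)$, $\phi_k(t)=S_\sigma\circ\phi_0\circ s_\sigma^{-1}(t)$ on $s_\sigma([0,1])$, $\sigma\in\{1,\dots,N\}^k$; $\phi$ is the uniform limit of the $\phi_k$. *)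

theory Defs
  imports "HOL-Analysis.Analysis"
begin

section \<open>Hausdorff measure (unnormalised; normalisation is irrelevant for the statement)\<close>

definition hausdorff_pre :: "real \<Rightarrow> real \<Rightarrow> 'a::metric_space set \<Rightarrow> ennreal" where
  "hausdorff_pre s \<delta> A =
     (INF U \<in> {U :: nat \<Rightarrow> 'a set. A \<subseteq> (\<Union>i. U i) \<and> (\<forall>i. bounded (U i) \<and> diameter (U i) \<le> \<delta>)}.
        (\<Sum>i. ennreal (diameter (U i) powr s)))"

definition hausdorff_measure :: "real \<Rightarrow> 'a::metric_space set \<Rightarrow> ennreal" where
  "hausdorff_measure s A = (SUP \<delta> \<in> {0<..}. hausdorff_pre s \<delta> A)"

definition similarity :: "real \<Rightarrow> ('a::metric_space \<Rightarrow> 'a) \<Rightarrow> bool" where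
  "similarity r f \<longleftrightarrow> (\<forall>x y. dist (f x) (f y) = r * dist x y)"

definition IFS :: "nat \<Rightarrow> (nat \<Rightarrow> 'a::metric_space \<Rightarrow> 'a) \<Rightarrow> (nat \<Rightarrow> real) \<Rightarrow> 'a set \<Rightarrow> bool" where
  "IFS N S r \<gamma> \<longleftrightarrow> N \<ge> 2 \<and> (\<forall>i\<in>{1..N}. 0 < r i \<and> r i < 1 \<and> similarity (r i) (S i))
     \<and> compact \<gamma> \<and> \<gamma> \<noteq> {} \<and> \<gamma> = (\<Union>i\<in>{1..N}. S i ` \<gamma>)"

definition IFS_path :: "nat \<Rightarrow> (nat \<Rightarrow> 'a::metric_space \<Rightarrow> 'a) \<Rightarrow> (nat \<Rightarrow> real) \<Rightarrow> 'a set \<Rightarrow> 'a \<Rightarrow> 'a \<Rightarrow> bool" where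
  "IFS_path N S r \<gamma> a b \<longleftrightarrow> IFS N S r \<gamma> \<and> S 1 a = a \<and> S N b = b
     \<and> (\<forall>i\<in>{1..N-1}. S i b = S (i+1) a)"

definition IFS_arc :: "nat \<Rightarrow> (nat \<Rightarrow> 'a::metric_space \<Rightarrow> 'a) \<Rightarrow> (nat \<Rightarrow> real) \<Rightarrow> 'a set \<Rightarrow> 'a \<Rightarrow> 'a \<Rightarrow> bool" where
  "IFS_arc N S r \<gamma> a b \<longleftrightarrow> IFS_path N S r \<gamma> a b
     \<and> (\<forall>i\<in>{1..N-1}. S i ` \<gamma> \<inter> S (i+1) ` \<gamma> = {S (i+1) a})
     \<and> (\<forall>i\<in>{1..N}. \<forall>j\<in>{1..N}. i + 1 < j \<longrightarrow> S i ` \<gamma> \<inter> S j ` \<gamma> = {})"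

definition quasisymmetric_on :: "'a::metric_space set \<Rightarrow> ('a \<Rightarrow> 'b::metric_space) \<Rightarrow> bool" where
  "quasisymmetric_on A f \<longleftrightarrow> inj_on f A \<and>
     (\<exists>\<eta> :: real \<Rightarrow> real. strict_mono_on {0..} \<eta> \<and> continuous_on {0..} \<eta> \<and> \<eta> 0 = 0
        \<and> \<eta> ` {0..} = {0..}
        \<and> (\<forall>x\<in>A. \<forall>y\<in>A. \<forall>z\<in>A. x \<noteq> z \<longrightarrow>
              dist (f x) (f y) \<le> \<eta> (dist x y / dist x z) * dist (f x) (f z)))"

definition qs_equivalent_to_unit_interval :: "'a::metric_space set \<Rightarrow> bool" where
  "qs_equivalent_to_unit_interval \<gamma> \<longleftrightarrow>
     (\<exists>f :: real \<Rightarrow> 'a. f ` {0..1} = \<gamma> \<and> quasisymmetric_on {0..1} f)"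

definition IFS_quasiarc :: "nat \<Rightarrow> (nat \<Rightarrow> 'a::metric_space \<Rightarrow> 'a) \<Rightarrow> (nat \<Rightarrow> real) \<Rightarrow> 'a set \<Rightarrow> 'a \<Rightarrow> 'a \<Rightarrow> bool" where
  "IFS_quasiarc N S r \<gamma> a b \<longleftrightarrow> IFS_arc N S r \<gamma> a b \<and> qs_equivalent_to_unit_interval \<gamma>"

definition similarity_dimension :: "nat \<Rightarrow> (nat \<Rightarrow> real) \<Rightarrow> real \<Rightarrow> bool" where
  "similarity_dimension N r s \<longleftrightarrow> s > 0 \<and> (\<Sum>i=1..N. r i powr s) = 1"

definition hut_t :: "(nat \<Rightarrow> real) \<Rightarrow> real \<Rightarrow> nat \<Rightarrow> real" where
  "hut_t r s i = (\<Sum>j=1..i. r j powr s)"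

definition hut_s :: "(nat \<Rightarrow> real) \<Rightarrow> real \<Rightarrow> nat \<Rightarrow> real \<Rightarrow> real" where
  "hut_s r s i t = t * hut_t r s i + (1 - t) * hut_t r s (i - 1)"

definition word_comp :: "(nat \<Rightarrow> 'b \<Rightarrow> 'b) \<Rightarrow> nat list \<Rightarrow> 'b \<Rightarrow> 'b" where
  "word_comp F \<sigma> = foldr (\<lambda>i g. F i \<circ> g) \<sigma> id"

text \<open>phi_k(t) = S_sigma(phi_0(x)) where t = s_sigma(x), x in [0,1], |sigma| = k.\<close>
definition hut_approx :: "nat \<Rightarrow> (nat \<Rightarrow> 'a::real_vector \<Rightarrow> 'a) \<Rightarrow> (nat \<Rightarrow> real) \<Rightarrow> real
    \<Rightarrow> 'a \<Rightarrow> 'a \<Rightarrow> nat \<Rightarrow> real \<Rightarrow> 'a" where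
  "hut_approx N S r s a b k t = (SOME y. \<exists>\<sigma> x. set \<sigma> \<subseteq> {1..N} \<and> length \<sigma> = k \<and> x \<in> {0..1}
      \<and> t = word_comp (hut_s r s) \<sigma> x \<and> y = word_comp S \<sigma> (a + x *\<^sub>R (b - a)))"

definition hutchinson_param :: "nat \<Rightarrow> (nat \<Rightarrow> 'a::real_normed_vector \<Rightarrow> 'a) \<Rightarrow> (nat \<Rightarrow> real) \<Rightarrow> real
    \<Rightarrow> 'a \<Rightarrow> 'a \<Rightarrow> (real \<Rightarrow> 'a) \<Rightarrow> bool" where
  "hutchinson_param N S r s a b \<phi> \<longleftrightarrow>
     uniform_limit {0..1} (hut_approx N S r s a b) \<phi> sequentially"

end

theory Submission
  imports Defs
begin

text \<open>Write \<mu>(u, v) for the s-dimensional Hausdorff measure of \<phi>([u, v]). The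
  parameterization is self-similar, \<phi>(s_i t) = S_i(\<phi> t), so the scaling of Hausdorff measure
  under similarities gives \<mu>(s_i u, s_i v) = r_i^s \<mu>(u, v); moreover \<mu> is subadditive and
  \<mu>(0, 1) = H^s(\<gamma>), since \<phi>([0, 1]) = \<gamma>.
  If H^s(\<gamma>) is infinite, every nondegenerate [u, v] contains a parameter interval s_\<sigma>([0, 1])
  whose image is the similar copy S_\<sigma>(\<gamma>), so \<mu>(u, v) is infinite as well. Otherwise the defect
  \<mu>(u, v) - H^s(\<gamma>) (v - u) is bounded, and splitting [0, 1] into the pieces s_i([0, 1]) shows that
  its supremum is at most max_i r_i^s times itself, hence nonpositive; this is done first for
  prefixes [0, v] and suffixes [u, 1], then for arbitrary intervals. Subadditivity along
  [0, u], [u, v], [v, 1] gives the reverse inequality.\<close>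

section \<open>Hausdorff measure\<close>

lemma le_mult_INF_ennreal:
  fixes K X :: ennreal
  assumes "K \<noteq> 0" "K \<noteq> top" "\<And>U. U \<in> C \<Longrightarrow> X \<le> K * g U"
  shows "X \<le> K * (INF U\<in>C. g U)"
proof -
  have "X / K \<le> (INF U\<in>C. g U)"
  proof (rule INF_greatest)
    fix U assume "U \<in> C"
    have "X / K \<le> (K * g U) / K" using assms(3)[OF \<open>U \<in> C\<close>] by (simp add: divide_right_mono_ennreal)
    also have "\<dots> = g U" using assms(1,2) by (metis mult.commute mult_divide_eq_ennreal)
    finally show "X / K \<le> g U" .
  qed
  then have "K * (X / K) \<le> K * (INF U\<in>C. g U)" by (simp add: mult_left_mono)
  moreover have "K * (X / K) = X" using assms(1,2)
    by (metis ennreal_times_divide mult.commute mult_divide_eq_ennreal)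
  ultimately show ?thesis by simp
qed

lemma le_INF_add_INF_ennreal:
  fixes g h :: "_ \<Rightarrow> ennreal"
  assumes "\<And>U V. U \<in> C \<Longrightarrow> V \<in> D \<Longrightarrow> X \<le> g U + h V"
  shows "X \<le> (INF U\<in>C. g U) + (INF V\<in>D. h V)"
proof (cases "C = {} \<or> D = {}")
  case True then show ?thesis by auto
next
  case False
  have add_INF: "c + (INF x\<in>A. f x) = (INF x\<in>A. c + f x)" if "A \<noteq> {}" for c :: ennreal and f A
  proof -
    have "c + Inf (f ` A) = Inf ((+) c ` f ` A)"
      by (rule continuous_at_Inf_mono) (use that in \<open>auto simp: mono_def add_left_mono intro: continuous_intros\<close>)
    then show ?thesis by (simp add: image_comp)
  qed
  have "X \<le> (INF U\<in>C. g U + (INF V\<in>D. h V))"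
    using assms False by (auto intro!: INF_greatest simp: add_INF)
  also have "\<dots> = (INF U\<in>C. g U) + (INF V\<in>D. h V)"
    using add_INF[of C "(INF V\<in>D. h V)" g] False by (simp add: add.commute)
  finally show ?thesis .
qed

lemma suminf_interleave_ennreal:
  fixes U V :: "nat \<Rightarrow> ennreal"
  shows "(\<Sum>i. if even i then U (i div 2) else V (i div 2)) = (\<Sum>i. U i) + (\<Sum>i. V i)"
proof -
  let ?W = "\<lambda>i. if even i then U (i div 2) else V (i div 2)"
  have "(\<lambda>n. sum ?W {n * 2..<n * 2 + 2}) sums (\<Sum>i. ?W i)"
    by (intro sums_group summable_sums summableI) simp
  moreover have "sum ?W {n * 2..<n * 2 + 2} = U n + V n" for n
  proof -
    have "{n * 2..<n * 2 + 2} = {2*n, Suc (2*n)}" by auto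
    then show ?thesis by simp
  qed
  ultimately have "(\<lambda>n. U n + V n) sums (\<Sum>i. ?W i)" by simp
  then show ?thesis by (simp add: sums_unique suminf_add[OF summableI summableI])
qed

lemma diameter_le_dist:
  fixes S :: "'a::metric_space set"
  assumes "S \<noteq> {} \<or> 0 \<le> d" and "\<And>x y. x \<in> S \<Longrightarrow> y \<in> S \<Longrightarrow> dist x y \<le> d"
  shows "diameter S \<le> d"
  using assms unfolding diameter_def by (auto intro!: cSUP_least)

lemma hausdorff_pre_le_hausdorff_measure: "0 < \<delta> \<Longrightarrow> hausdorff_pre s \<delta> A \<le> hausdorff_measure s A"
  unfolding hausdorff_measure_def by (rule SUP_upper) auto

lemma hausdorff_pre_mono: "A \<subseteq> B \<Longrightarrow> hausdorff_pre s \<delta> A \<le> hausdorff_pre s \<delta> B"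
  unfolding hausdorff_pre_def by (rule INF_superset_mono) auto

lemma hausdorff_measure_mono: "A \<subseteq> B \<Longrightarrow> hausdorff_measure s A \<le> hausdorff_measure s B"
  unfolding hausdorff_measure_def by (rule SUP_mono) (use hausdorff_pre_mono in blast)

lemma hausdorff_pre_Un: "hausdorff_pre s \<delta> (A \<union> B) \<le> hausdorff_pre s \<delta> A + hausdorff_pre s \<delta> B"
proof -
  let ?C = "\<lambda>A. {U :: nat \<Rightarrow> _ set. A \<subseteq> (\<Union>i. U i) \<and> (\<forall>i. bounded (U i) \<and> diameter (U i) \<le> \<delta>)}"
  let ?g = "\<lambda>U :: nat \<Rightarrow> _ set. \<Sum>i. ennreal (diameter (U i) powr s)"
  have "hausdorff_pre s \<delta> (A \<union> B) \<le> ?g U + ?g V" if U: "U \<in> ?C A" and V: "V \<in> ?C B" for U V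
  proof -
    define W where "W i = (if even i then U (i div 2) else V (i div 2))" for i
    have "A \<union> B \<subseteq> (\<Union>i. W i)"
    proof
      fix x assume "x \<in> A \<union> B"
      then obtain i where "x \<in> U i \<or> x \<in> V i" using U V by blast
      then have "x \<in> W (2 * i) \<or> x \<in> W (Suc (2 * i))" by (simp add: W_def)
      then show "x \<in> (\<Union>i. W i)" by blast
    qed
    then have "W \<in> ?C (A \<union> B)" using U V by (auto simp: W_def)
    then have "hausdorff_pre s \<delta> (A \<union> B) \<le> ?g W" unfolding hausdorff_pre_def by (rule INF_lower)
    also have "?g W = ?g U + ?g V"
    proof -
      have "(\<lambda>i. ennreal (diameter (W i) powr s)) = (\<lambda>i. if even i
          then ennreal (diameter (U (i div 2)) powr s) else ennreal (diameter (V (i div 2)) powr s))"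
        by (simp add: W_def fun_eq_iff)
      then show ?thesis
        using suminf_interleave_ennreal[of "\<lambda>i. ennreal (diameter (U i) powr s)"
            "\<lambda>i. ennreal (diameter (V i) powr s)"] by simp
    qed
    finally show ?thesis .
  qed
  then show ?thesis unfolding hausdorff_pre_def by (rule le_INF_add_INF_ennreal)
qed

lemma hausdorff_measure_Un:
  "hausdorff_measure s (A \<union> B) \<le> hausdorff_measure s A + hausdorff_measure s B"
  unfolding hausdorff_measure_def
proof (rule SUP_least)
  fix \<delta> :: real assume "\<delta> \<in> {0<..}"
  then have "hausdorff_pre s \<delta> A + hausdorff_pre s \<delta> B
      \<le> (SUP \<delta>\<in>{0<..}. hausdorff_pre s \<delta> A) + (SUP \<delta>\<in>{0<..}. hausdorff_pre s \<delta> B)"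
    by (intro add_mono SUP_upper)
  then show "hausdorff_pre s \<delta> (A \<union> B)
      \<le> (SUP \<delta>\<in>{0<..}. hausdorff_pre s \<delta> A) + (SUP \<delta>\<in>{0<..}. hausdorff_pre s \<delta> B)"
    using hausdorff_pre_Un order_trans by blast
qed

lemma hausdorff_measure_singleton: "0 < s \<Longrightarrow> hausdorff_measure s {p} = 0"
proof -
  assume "0 < s"
  have "hausdorff_pre s \<delta> {p} \<le> (\<Sum>i. ennreal (diameter {p} powr s))" if "0 < \<delta>" for \<delta>
    unfolding hausdorff_pre_def by (rule INF_lower) (use that in auto)
  then show ?thesis unfolding hausdorff_measure_def by simp
qed

lemma lipschitz_image_bounded_diameter:
  fixes f :: "'a::metric_space \<Rightarrow> 'b::metric_space"
  assumes c: "0 < c" and U: "bounded U"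
    and lip: "\<And>x y. x \<in> A \<Longrightarrow> y \<in> A \<Longrightarrow> dist (f x) (f y) \<le> c * dist x y"
  shows "bounded (f ` (U \<inter> A)) \<and> diameter (f ` (U \<inter> A)) \<le> c * diameter U"
proof -
  have dist_le: "dist y z \<le> c * diameter U" if yz: "y \<in> f ` (U \<inter> A)" "z \<in> f ` (U \<inter> A)" for y z
  proof -
    obtain x x' where "x \<in> U \<inter> A" "x' \<in> U \<inter> A" "y = f x" "z = f x'" using yz by blast
    then have "dist y z \<le> c * dist x x'" using lip by simp
    also have "\<dots> \<le> c * diameter U"
      using diameter_bounded_bound[OF U] \<open>x \<in> U \<inter> A\<close> \<open>x' \<in> U \<inter> A\<close> c by simp
    finally show ?thesis .
  qed
  have "bounded (f ` (U \<inter> A))"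
    unfolding bounded_two_points using dist_le by (intro exI[of _ "c * diameter U"]) auto
  moreover have "diameter (f ` (U \<inter> A)) \<le> c * diameter U"
  proof (rule diameter_le_dist)
    show "f ` (U \<inter> A) \<noteq> {} \<or> 0 \<le> c * diameter U" using diameter_ge_0[OF U] c by simp
  qed (rule dist_le)
  ultimately show ?thesis ..
qed

lemma hausdorff_pre_lipschitz_image:
  fixes f :: "'a::metric_space \<Rightarrow> 'b::metric_space"
  assumes c: "0 < c" and s: "0 < s"
    and lip: "\<And>x y. x \<in> A \<Longrightarrow> y \<in> A \<Longrightarrow> dist (f x) (f y) \<le> c * dist x y"
  shows "hausdorff_pre s \<delta> (f ` A) \<le> ennreal (c powr s) * hausdorff_pre s (\<delta> / c) A"
  unfolding hausdorff_pre_def[of s "\<delta> / c"]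
proof (rule le_mult_INF_ennreal)
  fix U :: "nat \<Rightarrow> 'a set"
  assume "U \<in> {U. A \<subseteq> (\<Union>i. U i) \<and> (\<forall>i. bounded (U i) \<and> diameter (U i) \<le> \<delta> / c)}"
  then have cov: "A \<subseteq> (\<Union>i. U i)" and bU: "\<And>i. bounded (U i)"
    and dU: "\<And>i. c * diameter (U i) \<le> \<delta>"
    using c by (auto simp: field_simps)
  define V where "V i = f ` (U i \<inter> A)" for i
  have V: "bounded (V i) \<and> diameter (V i) \<le> c * diameter (U i)" for i
    unfolding V_def using c bU lip by (rule lipschitz_image_bounded_diameter)
  have "V \<in> {U. f ` A \<subseteq> (\<Union>i. U i) \<and> (\<forall>i. bounded (U i) \<and> diameter (U i) \<le> \<delta>)}"
  proof -
    have "f ` A \<subseteq> (\<Union>i. V i)" using cov unfolding V_def by blast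
    moreover have "diameter (V i) \<le> \<delta>" for i using V[of i] dU[of i] by linarith
    ultimately show ?thesis using V by simp
  qed
  then have "hausdorff_pre s \<delta> (f ` A) \<le> (\<Sum>i. ennreal (diameter (V i) powr s))"
    unfolding hausdorff_pre_def by (rule INF_lower)
  also have "\<dots> \<le> (\<Sum>i. ennreal (c powr s) * ennreal (diameter (U i) powr s))"
  proof (intro suminf_le summableI)
    fix i
    have "diameter (V i) powr s \<le> (c * diameter (U i)) powr s"
      using V diameter_ge_0 s by (intro powr_mono2) auto
    also have "\<dots> = c powr s * diameter (U i) powr s" by (rule powr_mult)
    finally show "ennreal (diameter (V i) powr s) \<le> ennreal (c powr s) * ennreal (diameter (U i) powr s)"
      by (simp add: ennreal_mult[symmetric] ennreal_leI)
  qed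
  finally show "hausdorff_pre s \<delta> (f ` A) \<le> ennreal (c powr s) * (\<Sum>i. ennreal (diameter (U i) powr s))"
    by simp
qed (use c in auto)

lemma hausdorff_measure_lipschitz_image:
  fixes f :: "'a::metric_space \<Rightarrow> 'b::metric_space"
  assumes c: "0 < c" and s: "0 < s"
    and lip: "\<And>x y. x \<in> A \<Longrightarrow> y \<in> A \<Longrightarrow> dist (f x) (f y) \<le> c * dist x y"
  shows "hausdorff_measure s (f ` A) \<le> ennreal (c powr s) * hausdorff_measure s A"
  unfolding hausdorff_measure_def[of s "f ` A"]
proof (rule SUP_least)
  fix \<delta> :: real assume "\<delta> \<in> {0<..}"
  have "hausdorff_pre s \<delta> (f ` A) \<le> ennreal (c powr s) * hausdorff_pre s (\<delta> / c) A"
    using c s lip by (rule hausdorff_pre_lipschitz_image)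
  also have "\<dots> \<le> ennreal (c powr s) * hausdorff_measure s A"
    using \<open>\<delta> \<in> {0<..}\<close> c by (intro mult_left_mono hausdorff_pre_le_hausdorff_measure) auto
  finally show "hausdorff_pre s \<delta> (f ` A) \<le> ennreal (c powr s) * hausdorff_measure s A" .
qed

lemma hausdorff_measure_similarity_image:
  fixes f :: "'a::metric_space \<Rightarrow> 'a"
  assumes c: "0 < c" and s: "0 < s" and f: "\<And>x y. dist (f x) (f y) = c * dist x y"
  shows "hausdorff_measure s (f ` A) = ennreal (c powr s) * hausdorff_measure s A"
proof (rule antisym)
  show "hausdorff_measure s (f ` A) \<le> ennreal (c powr s) * hausdorff_measure s A"
    by (rule hausdorff_measure_lipschitz_image[OF c s]) (simp add: f)
  have inj: "inj f"
    using f c by (intro injI) (metis dist_eq_0_iff mult_eq_0_iff order_less_irrefl)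
  have "hausdorff_measure s (inv f ` f ` A) \<le> ennreal ((1 / c) powr s) * hausdorff_measure s (f ` A)"
    using inj f c s by (intro hausdorff_measure_lipschitz_image) (auto simp: field_simps)
  then have "ennreal (c powr s) * hausdorff_measure s A
      \<le> ennreal (c powr s) * (ennreal ((1 / c) powr s) * hausdorff_measure s (f ` A))"
    using inj by (simp add: image_comp mult_left_mono)
  also have "\<dots> = ennreal (c powr s * (1 / c) powr s) * hausdorff_measure s (f ` A)"
    by (simp add: ennreal_mult mult.assoc)
  also have "c powr s * (1 / c) powr s = 1"
    using c by (simp add: powr_mult[symmetric])
  finally show "ennreal (c powr s) * hausdorff_measure s A \<le> hausdorff_measure s (f ` A)"
    by simp
qed

lemma word_comp_Nil [simp]: "word_comp F [] x = x"
  by (simp add: word_comp_def)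

lemma word_comp_Cons [simp]: "word_comp F (i # \<sigma>) x = F i (word_comp F \<sigma> x)"
  by (simp add: word_comp_def)

lemma word_comp_append [simp]: "word_comp F (\<sigma> @ \<tau>) x = word_comp F \<sigma> (word_comp F \<tau> x)"
  by (induction \<sigma>) auto

lemma nonpos_if_bounds_contract:
  fixes F :: "'b \<Rightarrow> real"
  assumes bdd: "\<And>x. x \<in> X \<Longrightarrow> F x \<le> B" and c: "c < 1"
    and contract: "\<And>M x. (\<And>y. y \<in> X \<Longrightarrow> F y \<le> M) \<Longrightarrow> 0 \<le> M \<Longrightarrow> x \<in> X \<Longrightarrow> F x \<le> c * M"
    and x: "x \<in> X"
  shows "F x \<le> 0"
proof -
  define M where "M = max 0 (Sup (F ` X))"
  have bound: "F y \<le> M" if "y \<in> X" for y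
  proof -
    have "bdd_above (F ` X)" using bdd by (intro bdd_aboveI2)
    then have "F y \<le> Sup (F ` X)" using that by (intro cSup_upper) auto
    then show ?thesis unfolding M_def by linarith
  qed
  have "M \<le> 0"
  proof (rule ccontr)
    assume "\<not> M \<le> 0"
    then have "M = Sup (F ` X)" "c * M < M" using c unfolding M_def by auto
    moreover have "Sup (F ` X) \<le> c * M"
      using x contract[OF bound] by (intro cSup_least) (auto simp: M_def)
    ultimately show False by linarith
  qed
  then show ?thesis using bound[OF x] by linarith
qed

lemma Max_image_bounds:
  fixes f :: "'b \<Rightarrow> real"
  assumes "finite A" "A \<noteq> {}" "\<And>i. i \<in> A \<Longrightarrow> 0 < f i \<and> f i < 1"
  shows "0 < Max (f ` A)" and "Max (f ` A) < 1" and "i \<in> A \<Longrightarrow> f i \<le> Max (f ` A)"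
proof -
  show le_Max: "f i \<le> Max (f ` A)" if "i \<in> A" for i
    using assms(1) that by (intro Max_ge) auto
  show "Max (f ` A) < 1" using assms by (subst Max_less_iff) auto
  obtain i where "i \<in> A" using assms(2) by blast
  then show "0 < Max (f ` A)" using assms(3) le_Max by (meson order_less_le_trans)
qed

lemma prod_list_map_bounds:
  fixes f :: "'b \<Rightarrow> real"
  assumes "set \<sigma> \<subseteq> A" "\<And>i. i \<in> A \<Longrightarrow> 0 < f i \<and> f i \<le> c"
  shows "0 < prod_list (map f \<sigma>) \<and> prod_list (map f \<sigma>) \<le> c ^ length \<sigma>"
  using assms(1)
proof (induction \<sigma>)
  case (Cons i \<sigma>)
  then have "0 < f i" "f i \<le> c" "0 < prod_list (map f \<sigma>)" "prod_list (map f \<sigma>) \<le> c ^ length \<sigma>"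
    using assms(2) by auto
  then show ?case by (simp add: mult_mono)
qed simp

section \<open>The Hutchinson parameterization of an IFS path\<close>

locale hutchinson_path =
  fixes N :: nat and S :: "nat \<Rightarrow> 'a::real_normed_vector \<Rightarrow> 'a" and r :: "nat \<Rightarrow> real"
    and \<gamma> :: "'a set" and a b :: 'a and s :: real and \<phi> :: "real \<Rightarrow> 'a"
  assumes path: "IFS_path N S r \<gamma> a b"
    and dimension: "similarity_dimension N r s"
    and parameterization: "hutchinson_param N S r s a b \<phi>"
begin

lemma N_ge_2: "2 \<le> N"
  and ratio_pos: "i \<in> {1..N} \<Longrightarrow> 0 < r i"
  and ratio_less_1: "i \<in> {1..N} \<Longrightarrow> r i < 1"
  and dist_S: "i \<in> {1..N} \<Longrightarrow> dist (S i x) (S i y) = r i * dist x y"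
  and compact_\<gamma>: "compact \<gamma>"
  and \<gamma>_nonempty: "\<gamma> \<noteq> {}"
  and \<gamma>_invariant: "\<gamma> = (\<Union>i\<in>{1..N}. S i ` \<gamma>)"
  and S_1_a: "S 1 a = a"
  and S_N_b: "S N b = b"
  and S_link: "i \<in> {1..N-1} \<Longrightarrow> S i b = S (i+1) a"
  and s_pos: "0 < s"
  and ratio_powr_sum: "(\<Sum>i=1..N. r i powr s) = 1"
  and hut_approx_uniform_limit: "uniform_limit {0..1} (hut_approx N S r s a b) \<phi> sequentially"
  using path dimension parameterization
  unfolding IFS_path_def IFS_def similarity_def similarity_dimension_def hutchinson_param_def
  by auto

abbreviation ht :: "nat \<Rightarrow> real" where "ht \<equiv> hut_t r s"
abbreviation hs :: "nat \<Rightarrow> real \<Rightarrow> real" where "hs \<equiv> hut_s r s"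
abbreviation approx :: "nat \<Rightarrow> real \<Rightarrow> 'a" where "approx \<equiv> hut_approx N S r s a b"

definition weight :: "nat \<Rightarrow> real" where "weight i = r i powr s"

definition phi0 :: "real \<Rightarrow> 'a" where "phi0 x = a + x *\<^sub>R (b - a)"

lemma weight_pos: assumes "i \<in> {1..N}" shows "0 < weight i"
  using ratio_pos[OF assms] by (simp add: weight_def)

lemma ht_0 [simp]: "ht 0 = 0"
  by (simp add: hut_t_def)

lemma ht_Suc: "ht (Suc i) = ht i + weight (Suc i)"
  by (simp add: hut_t_def weight_def)

lemma ht_N: "ht N = 1"
  using ratio_powr_sum by (simp add: hut_t_def)

lemma ht_step: "1 \<le> i \<Longrightarrow> ht i = ht (i - 1) + weight i"
  using ht_Suc[of "i - 1"] by simp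

lemma ht_strict_mono: "i < j \<Longrightarrow> j \<le> N \<Longrightarrow> ht i < ht j"
proof (induction j)
  case (Suc j)
  have "0 < weight (Suc j)" using Suc.prems by (intro weight_pos) auto
  then show ?case using Suc by (cases "i < j") (auto simp: ht_Suc less_Suc_eq)
qed simp

lemma ht_mono: "i \<le> j \<Longrightarrow> j \<le> N \<Longrightarrow> ht i \<le> ht j"
  using ht_strict_mono by (cases "i = j") (auto simp: le_less)

lemma ht_in_unit: "i \<le> N \<Longrightarrow> ht i \<in> {0..1}"
  using ht_mono[of 0 i] ht_mono[of i N] ht_N by simp

lemma hs_eq: "i \<in> {1..N} \<Longrightarrow> hs i x = ht (i - 1) + x * weight i"
  using ht_step[of i] by (simp add: hut_s_def algebra_simps)

lemma hs_0: "i \<in> {1..N} \<Longrightarrow> hs i 0 = ht (i - 1)"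
  by (simp add: hs_eq)

lemma hs_1: "i \<in> {1..N} \<Longrightarrow> hs i 1 = ht i"
  by (simp add: hs_eq ht_step)

lemma hs_le_cancel: "i \<in> {1..N} \<Longrightarrow> hs i x \<le> hs i y \<longleftrightarrow> x \<le> y"
  using weight_pos[of i] by (simp add: hs_eq)

lemma hs_eq_iff: "i \<in> {1..N} \<Longrightarrow> hs i x = hs i y \<longleftrightarrow> x = y"
  using weight_pos[of i] by (simp add: hs_eq)

lemma hs_bounds: "i \<in> {1..N} \<Longrightarrow> x \<in> {0..1} \<Longrightarrow> ht (i - 1) \<le> hs i x \<and> hs i x \<le> ht i"
  using hs_le_cancel[of i 0 x] hs_le_cancel[of i x 1] by (simp add: hs_0 hs_1)

lemma hs_in_unit: "i \<in> {1..N} \<Longrightarrow> x \<in> {0..1} \<Longrightarrow> hs i x \<in> {0..1}"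
  using hs_bounds ht_in_unit[of "i - 1"] ht_in_unit[of i] by fastforce

lemma word_comp_hs_in_unit: "set \<sigma> \<subseteq> {1..N} \<Longrightarrow> x \<in> {0..1} \<Longrightarrow> word_comp hs \<sigma> x \<in> {0..1}"
proof (induction \<sigma>)
  case (Cons i \<sigma>)
  then show ?case using hs_in_unit[of i "word_comp hs \<sigma> x"] by simp
qed simp

lemma ht_interval_exists:
  assumes "t \<in> {0..1}" shows "\<exists>i\<in>{1..N}. ht (i - 1) \<le> t \<and> t \<le> ht i"
proof -
  define i where "i = (LEAST i. t \<le> ht i)"
  have "t \<le> ht N" using assms ht_N by simp
  then have ti: "t \<le> ht i" and iN: "i \<le> N"
    unfolding i_def by (auto intro: LeastI Least_le)
  show ?thesis
  proof (cases "i = 0")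
    case True
    then show ?thesis
      using ti assms N_ge_2 ht_in_unit[of 1] by (intro bexI[of _ 1]) auto
  next
    case False
    have "\<not> t \<le> ht (i - 1)" unfolding i_def by (rule not_less_Least) (use False i_def in auto)
    then show ?thesis using False iN ti by (intro bexI[of _ i]) auto
  qed
qed

lemma hs_onto_piece:
  assumes "i \<in> {1..N}" "ht (i - 1) \<le> t" "t \<le> ht i"
  shows "\<exists>x\<in>{0..1}. t = hs i x"
proof -
  define x where "x = (t - ht (i - 1)) / weight i"
  have "0 < weight i" using weight_pos assms by simp
  then have "t = hs i x" "x \<in> {0..1}"
    using assms ht_step[of i] by (auto simp: x_def hs_eq field_simps)
  then show ?thesis by blast
qed

lemma unit_interval_covered: "t \<in> {0..1} \<Longrightarrow> \<exists>i\<in>{1..N}. \<exists>x\<in>{0..1}. t = hs i x"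
  using ht_interval_exists hs_onto_piece by blast

lemma phi0_0 [simp]: "phi0 0 = a" and phi0_1 [simp]: "phi0 1 = b"
  by (simp_all add: phi0_def)

lemma word_comp_phi0_at_1:
  "set \<sigma> \<subseteq> {1..N} \<Longrightarrow> x \<in> {0..1} \<Longrightarrow> word_comp hs \<sigma> x = 1 \<Longrightarrow> word_comp S \<sigma> (phi0 x) = b"
proof (induction \<sigma>)
  case (Cons i \<sigma>)
  let ?X = "word_comp hs \<sigma> x"
  have i: "i \<in> {1..N}" and X: "?X \<in> {0..1}" and hX: "hs i ?X = 1"
    using Cons.prems word_comp_hs_in_unit[of \<sigma> x] by auto
  have "i = N"
  proof (rule ccontr)
    assume "i \<noteq> N"
    then have "ht i < ht N" using i by (intro ht_strict_mono) auto
    then show False using hs_bounds[OF i X] hX ht_N by simp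
  qed
  then have "hs i ?X = hs i 1" using hX hs_1[OF i] ht_N \<open>i = N\<close> by simp
  then have "?X = 1" using hs_eq_iff[OF i] by blast
  then show ?case using Cons \<open>i = N\<close> S_N_b by simp
qed simp

lemma word_comp_phi0_at_0:
  "set \<sigma> \<subseteq> {1..N} \<Longrightarrow> x \<in> {0..1} \<Longrightarrow> word_comp hs \<sigma> x = 0 \<Longrightarrow> word_comp S \<sigma> (phi0 x) = a"
proof (induction \<sigma>)
  case (Cons i \<sigma>)
  let ?X = "word_comp hs \<sigma> x"
  have i: "i \<in> {1..N}" and X: "?X \<in> {0..1}" and hX: "hs i ?X = 0"
    using Cons.prems word_comp_hs_in_unit[of \<sigma> x] by auto
  have "i = 1"
  proof (rule ccontr)
    assume "i \<noteq> 1"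
    then have "ht 0 < ht (i - 1)" using i by (intro ht_strict_mono) auto
    then show False using hs_bounds[OF i X] hX by simp
  qed
  then have "hs i ?X = hs i 0" using hX hs_0[OF i] \<open>i = 1\<close> by simp
  then have "?X = 0" using hs_eq_iff[OF i] by blast
  then show ?case using Cons \<open>i = 1\<close> S_1_a by simp
qed simp

lemma hs_eq_hs_adjacent:
  assumes i: "i \<in> {1..N}" and j: "j \<in> {1..N}" and "i < j"
    and x: "x \<in> {0..1}" and y: "y \<in> {0..1}" and eq: "hs i x = hs j y"
  shows "j = i + 1 \<and> x = 1 \<and> y = 0"
proof -
  have "ht i \<le> ht (j - 1)" using \<open>i < j\<close> j by (intro ht_mono) auto
  then have node: "hs i x = ht i" "hs j y = ht (j - 1)" "ht i = ht (j - 1)"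
    using hs_bounds[OF i x] hs_bounds[OF j y] eq by linarith+
  have "j = i + 1"
  proof (rule ccontr)
    assume "j \<noteq> i + 1"
    then have "ht i < ht (j - 1)" using \<open>i < j\<close> j by (intro ht_strict_mono) auto
    then show False using node by simp
  qed
  moreover have "x = 1" using node hs_eq_iff[OF i, of x 1] hs_1[OF i] by simp
  moreover have "y = 0" using node hs_eq_iff[OF j, of y 0] hs_0[OF j] by simp
  ultimately show ?thesis by simp
qed

text \<open>All addresses of a parameter lead to the same point, by the linking conditions
  S_i b = S_(i+1) a; so the choice made in hut_approx is immaterial.\<close>
lemma word_comp_phi0_well_defined:
  "set \<sigma> \<subseteq> {1..N} \<Longrightarrow> set \<tau> \<subseteq> {1..N} \<Longrightarrow> length \<sigma> = length \<tau> \<Longrightarrow>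
   x \<in> {0..1} \<Longrightarrow> y \<in> {0..1} \<Longrightarrow> word_comp hs \<sigma> x = word_comp hs \<tau> y \<Longrightarrow>
   word_comp S \<sigma> (phi0 x) = word_comp S \<tau> (phi0 y)"
proof (induction \<sigma> arbitrary: \<tau>)
  case (Cons i \<sigma>)
  then obtain j \<tau>' where \<tau>: "\<tau> = j # \<tau>'" by (cases \<tau>) auto
  let ?X = "word_comp hs \<sigma> x" and ?Y = "word_comp hs \<tau>' y"
  have i: "i \<in> {1..N}" and j: "j \<in> {1..N}" and X: "?X \<in> {0..1}" and Y: "?Y \<in> {0..1}"
    and \<sigma>: "set \<sigma> \<subseteq> {1..N}" and \<tau>': "set \<tau>' \<subseteq> {1..N}" and len: "length \<sigma> = length \<tau>'"
    using Cons.prems word_comp_hs_in_unit[of \<sigma> x] word_comp_hs_in_unit[of \<tau>' y] \<tau> by auto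
  have eq: "hs i ?X = hs j ?Y" using Cons.prems \<tau> by simp
  consider "i = j" | "i < j" | "j < i" by linarith
  then show ?case
  proof cases
    case 1
    then have "?X = ?Y" using eq hs_eq_iff[OF i] by simp
    then show ?thesis using Cons.IH[OF \<sigma> \<tau>' len] Cons.prems 1 \<tau> by simp
  next
    case 2
    with hs_eq_hs_adjacent[OF i j 2 X Y eq] have "j = i + 1" "?X = 1" "?Y = 0" by auto
    then show ?thesis
      using word_comp_phi0_at_1[OF \<sigma>] word_comp_phi0_at_0[OF \<tau>'] Cons.prems S_link[of i] i j \<tau>
      by auto
  next
    case 3
    with hs_eq_hs_adjacent[OF j i 3 Y X eq[symmetric]] have "i = j + 1" "?Y = 1" "?X = 0" by auto
    then show ?thesis
      using word_comp_phi0_at_1[OF \<tau>'] word_comp_phi0_at_0[OF \<sigma>] Cons.prems S_link[of j] i j \<tau>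
      by auto
  qed
qed simp

lemma address_exists:
  "t \<in> {0..1} \<Longrightarrow> \<exists>\<sigma> x. set \<sigma> \<subseteq> {1..N} \<and> length \<sigma> = k \<and> x \<in> {0..1} \<and> t = word_comp hs \<sigma> x"
proof (induction k arbitrary: t)
  case 0
  then show ?case by (intro exI[of _ "[]"]) auto
next
  case (Suc k)
  obtain i x where i: "i \<in> {1..N}" "x \<in> {0..1}" "t = hs i x"
    using unit_interval_covered[OF Suc.prems] by auto
  obtain \<sigma> y where "set \<sigma> \<subseteq> {1..N}" "length \<sigma> = k" "y \<in> {0..1}" "x = word_comp hs \<sigma> y"
    using Suc.IH[OF i(2)] by auto
  then show ?case using i by (intro exI[of _ "i # \<sigma>"] exI[of _ y]) auto
qed

lemma approx_word_comp:
  assumes "set \<sigma> \<subseteq> {1..N}" "x \<in> {0..1}"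
  shows "approx (length \<sigma>) (word_comp hs \<sigma> x) = word_comp S \<sigma> (phi0 x)"
proof -
  let ?P = "\<lambda>z. \<exists>\<sigma>' x'. set \<sigma>' \<subseteq> {1..N} \<and> length \<sigma>' = length \<sigma> \<and> x' \<in> {0..1}
      \<and> word_comp hs \<sigma> x = word_comp hs \<sigma>' x' \<and> z = word_comp S \<sigma>' (a + x' *\<^sub>R (b - a))"
  have "?P (word_comp S \<sigma> (phi0 x))" using assms by (auto simp: phi0_def)
  then have "?P (SOME z. ?P z)" by (rule someI)
  then obtain \<sigma>' x' where h: "set \<sigma>' \<subseteq> {1..N}" "length \<sigma>' = length \<sigma>" "x' \<in> {0..1}"
      "word_comp hs \<sigma> x = word_comp hs \<sigma>' x'" "(SOME z. ?P z) = word_comp S \<sigma>' (phi0 x')"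
    unfolding phi0_def by blast
  have "word_comp S \<sigma> (phi0 x) = word_comp S \<sigma>' (phi0 x')"
    using assms h by (intro word_comp_phi0_well_defined) auto
  then show ?thesis using h(5) unfolding hut_approx_def by simp
qed

lemma approx_Suc_hs:
  assumes "i \<in> {1..N}" "x \<in> {0..1}"
  shows "approx (Suc k) (hs i x) = S i (approx k x)"
proof -
  obtain \<sigma> y where h: "set \<sigma> \<subseteq> {1..N}" "length \<sigma> = k" "y \<in> {0..1}" "x = word_comp hs \<sigma> y"
    using address_exists[OF assms(2)] by blast
  then show ?thesis
    using approx_word_comp[of "i # \<sigma>" y] approx_word_comp[of \<sigma> y] assms by simp
qed

lemma tendsto_S:
  assumes i: "i \<in> {1..N}" and f: "(f \<longlongrightarrow> l) F"
  shows "((\<lambda>n. S i (f n)) \<longlongrightarrow> S i l) F"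
proof -
  have "((\<lambda>n. dist (f n) l) \<longlongrightarrow> 0) F" using f by (rule tendsto_dist_iff[THEN iffD1])
  then have "((\<lambda>n. dist (S i (f n)) (S i l)) \<longlongrightarrow> 0) F"
    using dist_S[OF i] by (simp add: tendsto_mult_right_zero)
  then show ?thesis by (rule tendsto_dist_iff[THEN iffD2])
qed

lemma approx_tendsto_phi: "t \<in> {0..1} \<Longrightarrow> (\<lambda>k. approx k t) \<longlonglongrightarrow> \<phi> t"
  by (rule tendsto_uniform_limitI[OF hut_approx_uniform_limit])

lemma phi_hs: assumes i: "i \<in> {1..N}" and x: "x \<in> {0..1}" shows "\<phi> (hs i x) = S i (\<phi> x)"
proof (rule LIMSEQ_unique)
  show "(\<lambda>k. approx (Suc k) (hs i x)) \<longlonglongrightarrow> \<phi> (hs i x)"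
    using approx_tendsto_phi[OF hs_in_unit[OF i x]] by (rule LIMSEQ_Suc)
  show "(\<lambda>k. approx (Suc k) (hs i x)) \<longlonglongrightarrow> S i (\<phi> x)"
    using tendsto_S[OF i approx_tendsto_phi[OF x]] approx_Suc_hs[OF i x] by simp
qed

lemma phi_word_comp:
  "set \<sigma> \<subseteq> {1..N} \<Longrightarrow> x \<in> {0..1} \<Longrightarrow> \<phi> (word_comp hs \<sigma> x) = word_comp S \<sigma> (\<phi> x)"
proof (induction \<sigma>)
  case (Cons i \<sigma>)
  then show ?case using phi_hs[of i "word_comp hs \<sigma> x"] word_comp_hs_in_unit[of \<sigma> x] by simp
qed simp

definition word_ratio :: "nat list \<Rightarrow> real" where "word_ratio \<sigma> = prod_list (map r \<sigma>)"

definition max_ratio :: real where "max_ratio = Max (r ` {1..N})"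

lemma max_ratio_bounds: "0 < max_ratio" "max_ratio < 1" "i \<in> {1..N} \<Longrightarrow> r i \<le> max_ratio"
  using Max_image_bounds[of "{1..N}" r] N_ge_2 ratio_pos ratio_less_1
  unfolding max_ratio_def by auto

lemma word_ratio_bounds:
  "set \<sigma> \<subseteq> {1..N} \<Longrightarrow> 0 < word_ratio \<sigma> \<and> word_ratio \<sigma> \<le> max_ratio ^ length \<sigma>"
  unfolding word_ratio_def using max_ratio_bounds ratio_pos by (intro prod_list_map_bounds) auto

lemma dist_word_comp:
  "set \<sigma> \<subseteq> {1..N} \<Longrightarrow> dist (word_comp S \<sigma> x) (word_comp S \<sigma> y) = word_ratio \<sigma> * dist x y"
  by (induction \<sigma>) (auto simp: word_ratio_def dist_S)

lemma word_comp_in_\<gamma>: "set \<sigma> \<subseteq> {1..N} \<Longrightarrow> z \<in> \<gamma> \<Longrightarrow> word_comp S \<sigma> z \<in> \<gamma>"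
proof (induction \<sigma>)
  case (Cons i \<sigma>)
  then show ?case by (subst \<gamma>_invariant) auto
qed simp

lemma phi_in_\<gamma>: assumes t: "t \<in> {0..1}" shows "\<phi> t \<in> \<gamma>"
proof -
  obtain y0 where y0: "y0 \<in> \<gamma>" using \<gamma>_nonempty by auto
  define D where "D = dist a y0 + norm (b - a)"
  have "\<exists>z\<in>\<gamma>. dist (approx k t) z \<le> max_ratio ^ k * D" for k
  proof -
    obtain \<sigma> x where h: "set \<sigma> \<subseteq> {1..N}" "length \<sigma> = k" "x \<in> {0..1}" "t = word_comp hs \<sigma> x"
      using address_exists[OF t] by blast
    have "dist (phi0 x) a \<le> norm (b - a)"
      using h(3) by (simp add: phi0_def dist_norm mult_left_le_one_le)
    then have "dist (phi0 x) y0 \<le> D"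
      using dist_triangle[of "phi0 x" y0 a] by (simp add: D_def)
    then have "word_ratio \<sigma> * dist (phi0 x) y0 \<le> max_ratio ^ k * D"
      using word_ratio_bounds[OF h(1)] h(2) by (intro mult_mono) auto
    moreover have "dist (approx k t) (word_comp S \<sigma> y0) = word_ratio \<sigma> * dist (phi0 x) y0"
      using approx_word_comp[OF h(1,3)] h(2,4) dist_word_comp[OF h(1)] by simp
    ultimately have "dist (approx k t) (word_comp S \<sigma> y0) \<le> max_ratio ^ k * D" by simp
    then show ?thesis using word_comp_in_\<gamma>[OF h(1) y0] by blast
  qed
  then obtain z where z: "\<And>k. z k \<in> \<gamma>" "\<And>k. dist (approx k t) (z k) \<le> max_ratio ^ k * D"
    by metis
  have "(\<lambda>k. max_ratio ^ k * D) \<longlonglongrightarrow> 0"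
    using max_ratio_bounds by (intro tendsto_mult_left_zero LIMSEQ_power_zero) auto
  then have "(\<lambda>k. z k - approx k t) \<longlonglongrightarrow> 0"
  proof (rule Lim_null_comparison[OF always_eventually, rotated])
    show "\<forall>k. norm (z k - approx k t) \<le> max_ratio ^ k * D"
      using z(2) by (simp add: dist_norm norm_minus_commute)
  qed
  then have "z \<longlonglongrightarrow> \<phi> t" by (rule Lim_transform[OF approx_tendsto_phi[OF t]])
  then show ?thesis using compact_\<gamma> z(1) by (meson closed_sequentially compact_imp_closed)
qed

definition word_weight :: "nat list \<Rightarrow> real" where "word_weight \<sigma> = prod_list (map weight \<sigma>)"

definition max_weight :: real where "max_weight = Max (weight ` {1..N})"

lemma weight_less_1: assumes "i \<in> {1..N}" shows "weight i < 1"
  using powr_less_mono2[OF s_pos, of "r i" 1] ratio_pos[OF assms] ratio_less_1[OF assms]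
  by (simp add: weight_def)

lemma max_weight_bounds: "0 < max_weight" "max_weight < 1" "i \<in> {1..N} \<Longrightarrow> weight i \<le> max_weight"
  using Max_image_bounds[of "{1..N}" weight] N_ge_2 weight_pos weight_less_1
  unfolding max_weight_def by auto

lemma word_weight_bounds:
  "set \<sigma> \<subseteq> {1..N} \<Longrightarrow> 0 < word_weight \<sigma> \<and> word_weight \<sigma> \<le> max_weight ^ length \<sigma>"
  unfolding word_weight_def using max_weight_bounds weight_pos by (intro prod_list_map_bounds) auto

lemma word_comp_hs_affine:
  "set \<sigma> \<subseteq> {1..N} \<Longrightarrow> word_comp hs \<sigma> x = word_weight \<sigma> * x + word_comp hs \<sigma> 0"
  by (induction \<sigma>) (auto simp: word_weight_def hs_eq algebra_simps)

lemma word_comp_hs_image: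
  assumes "set \<sigma> \<subseteq> {1..N}" "u \<le> v"
  shows "word_comp hs \<sigma> ` {u..v} = {word_comp hs \<sigma> u..word_comp hs \<sigma> v}"
proof -
  define c where "c = word_comp hs \<sigma> 0"
  have "word_comp hs \<sigma> = (\<lambda>x. word_weight \<sigma> * x + c)"
    using word_comp_hs_affine[OF assms(1)] unfolding c_def by blast
  then show ?thesis
    using word_weight_bounds[OF assms(1)] assms(2) by (simp add: image_affinity_atLeastAtMost)
qed

lemma \<gamma>_word_cover: "y \<in> \<gamma> \<Longrightarrow> \<exists>\<sigma>. set \<sigma> \<subseteq> {1..N} \<and> length \<sigma> = k \<and> y \<in> word_comp S \<sigma> ` \<gamma>"
proof (induction k arbitrary: y)
  case 0
  then show ?case by (intro exI[of _ "[]"]) auto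
next
  case (Suc k)
  obtain i z where "i \<in> {1..N}" "z \<in> \<gamma>" "y = S i z"
    using Suc.prems \<gamma>_invariant by blast
  moreover obtain \<sigma> where "set \<sigma> \<subseteq> {1..N}" "length \<sigma> = k" "z \<in> word_comp S \<sigma> ` \<gamma>"
    using Suc.IH[OF \<open>z \<in> \<gamma>\<close>] by blast
  ultimately show ?case by (intro exI[of _ "i # \<sigma>"]) auto
qed

text \<open>The parameters in those level-k cylinders s_\<sigma>([0, 1]) for which y lies in S_\<sigma>(\<gamma>).
  They form a nested sequence of nonempty compact sets, and \<phi> maps any common point to y.\<close>
definition address_set :: "'a \<Rightarrow> nat \<Rightarrow> real set" where
  "address_set y k = (\<Union>\<sigma>\<in>{\<sigma>. set \<sigma> \<subseteq> {1..N} \<and> length \<sigma> = k \<and> y \<in> word_comp S \<sigma> ` \<gamma>}.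
      word_comp hs \<sigma> ` {0..1})"

lemma compact_address_set: "compact (address_set y k)"
proof -
  have "finite {\<sigma>. set \<sigma> \<subseteq> {1..N} \<and> length \<sigma> = k \<and> y \<in> word_comp S \<sigma> ` \<gamma>}"
    by (rule finite_subset[OF _ finite_lists_length_eq[OF finite_atLeastAtMost, of 1 N k]]) auto
  then show ?thesis
    unfolding address_set_def by (intro compact_UN) (auto simp: word_comp_hs_image)
qed

lemma address_set_nonempty: "y \<in> \<gamma> \<Longrightarrow> address_set y k \<noteq> {}"
  using \<gamma>_word_cover[of y k] unfolding address_set_def by fastforce

lemma address_set_Suc_subset: "address_set y (Suc k) \<subseteq> address_set y k"
proof
  fix t assume "t \<in> address_set y (Suc k)"
  then obtain \<sigma>' x z where h: "set \<sigma>' \<subseteq> {1..N}" "length \<sigma>' = Suc k" "x \<in> {0..1}"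
      "z \<in> \<gamma>" "y = word_comp S \<sigma>' z" "t = word_comp hs \<sigma>' x"
    unfolding address_set_def by blast
  then obtain \<sigma> i where \<sigma>': "\<sigma>' = \<sigma> @ [i]"
    by (metis append_butlast_last_id list.size(3) nat.distinct(1))
  then have "i \<in> {1..N}" "set \<sigma> \<subseteq> {1..N}" "length \<sigma> = k" using h(1,2) by auto
  moreover have "S i z \<in> \<gamma>" using word_comp_in_\<gamma>[of "[i]" z] h(4) \<open>i \<in> {1..N}\<close> by simp
  moreover have "hs i x \<in> {0..1}" using hs_in_unit \<open>i \<in> {1..N}\<close> h(3) by blast
  ultimately show "t \<in> address_set y k"
    using h(5,6) \<sigma>' unfolding address_set_def by force
qed

lemma dist_phi_address_set:
  assumes "t \<in> address_set y k"
  shows "dist (\<phi> t) y \<le> max_ratio ^ k * diameter \<gamma>"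
proof -
  obtain \<sigma> x z where h: "set \<sigma> \<subseteq> {1..N}" "length \<sigma> = k" "x \<in> {0..1}"
      "t = word_comp hs \<sigma> x" "z \<in> \<gamma>" "y = word_comp S \<sigma> z"
    using assms unfolding address_set_def by blast
  have "dist (\<phi> t) y = word_ratio \<sigma> * dist (\<phi> x) z"
    using phi_word_comp[OF h(1,3)] h(4,6) dist_word_comp[OF h(1)] by simp
  also have "\<dots> \<le> max_ratio ^ k * diameter \<gamma>"
  proof (rule mult_mono)
    show "dist (\<phi> x) z \<le> diameter \<gamma>"
      using compact_imp_bounded[OF compact_\<gamma>] phi_in_\<gamma>[OF h(3)] h(5) by (rule diameter_bounded_bound)
  qed (use word_ratio_bounds[OF h(1)] h(2) max_ratio_bounds(1) in auto)
  finally show ?thesis .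
qed

lemma \<gamma>_subset_phi_image: assumes y: "y \<in> \<gamma>" shows "y \<in> \<phi> ` {0..1}"
proof -
  have "\<Inter>(range (address_set y)) \<noteq> {}"
  proof (rule compact_nest)
    show "address_set y n \<subseteq> address_set y m" if "m \<le> n" for m n
      using address_set_Suc_subset that by (rule lift_Suc_antimono_le)
  qed (simp_all add: compact_address_set address_set_nonempty[OF y])
  then obtain t where t: "\<And>k. t \<in> address_set y k" by blast
  have "t \<in> {0..1}" using t[of 0] unfolding address_set_def by (auto split: if_splits)
  have "(\<lambda>k. max_ratio ^ k * diameter \<gamma>) \<longlonglongrightarrow> 0"
    using max_ratio_bounds by (intro tendsto_mult_left_zero LIMSEQ_power_zero) auto
  then have "dist (\<phi> t) y \<le> 0"
    using dist_phi_address_set[OF t] by (intro LIMSEQ_le_const) auto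
  then show ?thesis using \<open>t \<in> {0..1}\<close> by auto
qed

lemma phi_image: "\<phi> ` {0..1} = \<gamma>"
  using phi_in_\<gamma> \<gamma>_subset_phi_image by blast

section \<open>Hausdorff measure of subarcs\<close>

definition \<mu> :: "real \<Rightarrow> real \<Rightarrow> ennreal" where "\<mu> u v = hausdorff_measure s (\<phi> ` {u..v})"

abbreviation H :: ennreal where "H \<equiv> hausdorff_measure s \<gamma>"

lemma phi_hs_image:
  assumes i: "i \<in> {1..N}" and "0 \<le> u" "u \<le> v" "v \<le> 1"
  shows "\<phi> ` {hs i u..hs i v} = S i ` \<phi> ` {u..v}"
proof -
  have "\<phi> ` {hs i u..hs i v} = \<phi> ` hs i ` {u..v}"
    using word_comp_hs_image[of "[i]" u v] i assms by simp
  also have "\<dots> = S i ` \<phi> ` {u..v}"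
    using phi_hs[OF i] assms by (force simp: image_iff)
  finally show ?thesis .
qed

lemma \<mu>_hs:
  assumes i: "i \<in> {1..N}" and "0 \<le> u" "u \<le> v" "v \<le> 1"
  shows "\<mu> (hs i u) (hs i v) = ennreal (weight i) * \<mu> u v"
  unfolding \<mu>_def phi_hs_image[OF assms] weight_def
  using ratio_pos[OF i] s_pos dist_S[OF i] by (intro hausdorff_measure_similarity_image) auto

lemma \<mu>_subadditive: "u \<le> w \<Longrightarrow> w \<le> v \<Longrightarrow> \<mu> u v \<le> \<mu> u w + \<mu> w v"
proof -
  assume "u \<le> w" "w \<le> v"
  then have "{u..v} = {u..w} \<union> {w..v}" by auto
  then show ?thesis unfolding \<mu>_def by (simp add: image_Un hausdorff_measure_Un)
qed

lemma \<mu>_point: "\<mu> u u = 0"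
  unfolding \<mu>_def using hausdorff_measure_singleton[OF s_pos] by simp

lemma \<mu>_le_H: "0 \<le> u \<Longrightarrow> v \<le> 1 \<Longrightarrow> \<mu> u v \<le> H"
  unfolding \<mu>_def phi_image[symmetric] by (intro hausdorff_measure_mono image_mono) auto

lemma \<mu>_unit: "\<mu> 0 1 = H"
  unfolding \<mu>_def phi_image ..

lemma cylinder_inside_interval:
  assumes "0 \<le> u" "u < v" "v \<le> 1"
  obtains \<sigma> where "set \<sigma> \<subseteq> {1..N}" "word_comp hs \<sigma> ` {0..1} \<subseteq> {u..v}"
proof -
  obtain k where k: "max_weight ^ k < (v - u) / 2"
    using real_arch_pow_inv[of "(v - u) / 2" max_weight] max_weight_bounds assms by auto
  obtain \<sigma> x where h: "set \<sigma> \<subseteq> {1..N}" "length \<sigma> = k" "x \<in> {0..1}"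
      "(u + v) / 2 = word_comp hs \<sigma> x"
    using address_exists[of "(u + v) / 2" k] assms by auto
  define c where "c = word_comp hs \<sigma> 0"
  have "0 < word_weight \<sigma>" "word_weight \<sigma> < (v - u) / 2"
    using word_weight_bounds[OF h(1)] h(2) k by auto
  moreover have "(u + v) / 2 = c + x * word_weight \<sigma>" "word_comp hs \<sigma> 1 = c + word_weight \<sigma>"
    using h(4) word_comp_hs_affine[OF h(1), of x] word_comp_hs_affine[OF h(1), of 1]
    by (simp_all add: c_def mult.commute)
  moreover have "0 \<le> x * word_weight \<sigma>" "x * word_weight \<sigma> \<le> word_weight \<sigma>"
    using h(3) calculation(1) by (auto simp: mult_left_le_one_le)
  ultimately have "u \<le> c \<and> word_comp hs \<sigma> 1 \<le> v" by argo
  then have "{c..word_comp hs \<sigma> 1} \<subseteq> {u..v}" by auto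
  then show ?thesis
    using that[OF h(1)] word_comp_hs_image[OF h(1), of 0 1] by (simp add: c_def)
qed

lemma \<mu>_infinite:
  assumes "H = top" "0 \<le> u" "u < v" "v \<le> 1"
  shows "\<mu> u v = top"
proof -
  obtain \<sigma> where \<sigma>: "set \<sigma> \<subseteq> {1..N}" "word_comp hs \<sigma> ` {0..1} \<subseteq> {u..v}"
    using cylinder_inside_interval assms(2-4) by blast
  have "\<phi> ` word_comp hs \<sigma> ` {0..1} = word_comp S \<sigma> ` \<phi> ` {0..1}"
    using phi_word_comp[OF \<sigma>(1)] by (force simp: image_iff)
  then have "hausdorff_measure s (word_comp S \<sigma> ` \<gamma>) \<le> \<mu> u v"
    unfolding \<mu>_def phi_image[symmetric] using \<sigma>(2) by (metis hausdorff_measure_mono image_mono)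
  moreover have "hausdorff_measure s (word_comp S \<sigma> ` \<gamma>) = ennreal (word_ratio \<sigma> powr s) * H"
    using word_ratio_bounds[OF \<sigma>(1)] dist_word_comp[OF \<sigma>(1)] s_pos
    by (intro hausdorff_measure_similarity_image) auto
  ultimately show ?thesis
    using assms(1) word_ratio_bounds[OF \<sigma>(1)] by (simp add: ennreal_mult_top top_unique)
qed

text \<open>Real-valued versions of \<mu> and H; since enn2real sends top to 0 they are only
  meaningful in the finite case treated below.\<close>
definition m :: "real \<Rightarrow> real \<Rightarrow> real" where "m u v = enn2real (\<mu> u v)"

definition H_real :: real where "H_real = enn2real H"

lemma m_nonneg: "0 \<le> m u v"
  by (simp add: m_def)

lemma H_real_nonneg: "0 \<le> H_real"
  by (simp add: H_real_def)

lemma m_point: "m u u = 0"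
  by (simp add: m_def \<mu>_point)

lemma m_unit: "m 0 1 = H_real"
  by (simp add: m_def H_real_def \<mu>_unit)

context
  assumes H_finite: "H \<noteq> top"
begin

lemma H_eq: "H = ennreal H_real"
  using H_finite by (simp add: H_real_def less_top)

lemma \<mu>_eq_m: assumes "0 \<le> u" "v \<le> 1" shows "\<mu> u v = ennreal (m u v)"
proof -
  have "\<mu> u v < top" using \<mu>_le_H[OF assms] H_finite by (simp add: le_less_trans less_top)
  then show ?thesis by (simp add: m_def less_top)
qed

lemma m_le_H_real: "0 \<le> u \<Longrightarrow> v \<le> 1 \<Longrightarrow> m u v \<le> H_real"
  using \<mu>_le_H[of u v] \<mu>_eq_m[of u v] H_eq H_real_nonneg by simp

lemma m_subadditive:
  assumes "0 \<le> u" "u \<le> w" "w \<le> v" "v \<le> 1"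
  shows "m u v \<le> m u w + m w v"
proof -
  have "0 \<le> w" "w \<le> 1" using assms by linarith+
  have "ennreal (m u v) \<le> ennreal (m u w) + ennreal (m w v)"
    using \<mu>_subadditive[OF assms(2,3)]
    unfolding \<mu>_eq_m[OF assms(1,4)] \<mu>_eq_m[OF assms(1) \<open>w \<le> 1\<close>] \<mu>_eq_m[OF \<open>0 \<le> w\<close> assms(4)] .
  also have "\<dots> = ennreal (m u w + m w v)" by (simp add: m_nonneg)
  finally show ?thesis using m_nonneg by (simp add: add_nonneg_nonneg del: ennreal_plus)
qed

lemma m_hs:
  assumes i: "i \<in> {1..N}" and "0 \<le> u" "u \<le> v" "v \<le> 1"
  shows "m (hs i u) (hs i v) = weight i * m u v"
proof -
  have "hs i u \<in> {0..1}" "hs i v \<in> {0..1}" using hs_in_unit[OF i] assms by auto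
  then have "ennreal (m (hs i u) (hs i v)) = ennreal (weight i) * ennreal (m u v)"
    using \<mu>_hs[OF assms] \<mu>_eq_m[of "hs i u" "hs i v"] \<mu>_eq_m[of u v] assms by simp
  also have "\<dots> = ennreal (weight i * m u v)"
    using weight_pos[OF i] m_nonneg by (simp add: ennreal_mult)
  finally show ?thesis using weight_pos[OF i] m_nonneg by simp
qed

lemma m_nodes: "i \<le> j \<Longrightarrow> j \<le> N \<Longrightarrow> m (ht i) (ht j) \<le> H_real * (ht j - ht i)"
proof (induction j)
  case 0
  then show ?case by (simp add: m_point)
next
  case (Suc j)
  show ?case
  proof (cases "i = Suc j")
    case True
    then show ?thesis by (simp add: m_point)
  next
    case False
    then have "i \<le> j" "j \<le> N" using Suc.prems by auto
    have "m (ht i) (ht (Suc j)) \<le> m (ht i) (ht j) + m (ht j) (ht (Suc j))"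
      using ht_in_unit[of i] ht_in_unit[of "Suc j"] ht_mono[of i j] ht_mono[of j "Suc j"]
        \<open>i \<le> j\<close> Suc.prems by (intro m_subadditive) auto
    also have "m (ht j) (ht (Suc j)) = weight (Suc j) * H_real"
      using m_hs[of "Suc j" 0 1] hs_0[of "Suc j"] hs_1[of "Suc j"] m_unit Suc.prems by simp
    finally show ?thesis
      using Suc.IH[OF \<open>i \<le> j\<close> \<open>j \<le> N\<close>] by (simp add: ht_Suc algebra_simps)
  qed
qed

lemma m_prefix: "v \<in> {0..1} \<Longrightarrow> m 0 v \<le> H_real * v"
proof -
  let ?F = "\<lambda>v. m 0 v - H_real * v"
  assume "v \<in> {0..1}"
  have "?F v \<le> 0"
  proof (rule nonpos_if_bounds_contract[of "{0..1}" ?F H_real, OF _ max_weight_bounds(2) _ \<open>v \<in> {0..1}\<close>])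
    show "?F x \<le> H_real" if "x \<in> {0..1}" for x
      using m_le_H_real[of 0 x] that mult_nonneg_nonneg[OF H_real_nonneg, of x] by simp
  next
    fix M x :: real assume bound: "\<And>y. y \<in> {0..1} \<Longrightarrow> ?F y \<le> M" and "0 \<le> M" and x: "x \<in> {0..1}"
    obtain j where j: "j \<in> {1..N}" "ht (j - 1) \<le> x" "x \<le> ht j"
      using ht_interval_exists[OF x] by auto
    obtain x' where x': "x' \<in> {0..1}" "x = hs j x'" using hs_onto_piece[OF j] by auto
    have "m 0 x \<le> m 0 (ht (j - 1)) + m (ht (j - 1)) x"
      using j x ht_in_unit[of "j - 1"] by (intro m_subadditive) auto
    also have "m 0 (ht (j - 1)) \<le> H_real * ht (j - 1)"
      using m_nodes[of 0 "j - 1"] j by fastforce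
    also have "m (ht (j - 1)) x = weight j * m 0 x'"
      using m_hs[OF j(1), of 0 x'] x' hs_0[OF j(1)] by simp
    also have "m 0 x' \<le> M + H_real * x'" using bound[OF x'(1)] by simp
    finally have "m 0 x \<le> H_real * ht (j - 1) + weight j * (M + H_real * x')"
      using weight_pos[OF j(1)] by (simp add: mult_left_mono)
    moreover have "x = ht (j - 1) + x' * weight j" using x'(2) hs_eq[OF j(1)] by simp
    moreover have "weight j * M \<le> max_weight * M"
      using max_weight_bounds(3)[OF j(1)] \<open>0 \<le> M\<close> by (simp add: mult_right_mono)
    ultimately show "?F x \<le> max_weight * M" by (simp add: algebra_simps)
  qed
  then show ?thesis by simp
qed

lemma m_suffix: "u \<in> {0..1} \<Longrightarrow> m u 1 \<le> H_real * (1 - u)"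
proof -
  let ?F = "\<lambda>u. m u 1 - H_real * (1 - u)"
  assume "u \<in> {0..1}"
  have "?F u \<le> 0"
  proof (rule nonpos_if_bounds_contract[of "{0..1}" ?F H_real, OF _ max_weight_bounds(2) _ \<open>u \<in> {0..1}\<close>])
    show "?F x \<le> H_real" if "x \<in> {0..1}" for x
      using m_le_H_real[of x 1] that mult_nonneg_nonneg[OF H_real_nonneg, of "1 - x"] by simp
  next
    fix M x :: real assume bound: "\<And>y. y \<in> {0..1} \<Longrightarrow> ?F y \<le> M" and "0 \<le> M" and x: "x \<in> {0..1}"
    obtain i where i: "i \<in> {1..N}" "ht (i - 1) \<le> x" "x \<le> ht i"
      using ht_interval_exists[OF x] by auto
    obtain x' where x': "x' \<in> {0..1}" "x = hs i x'" using hs_onto_piece[OF i] by auto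
    have "m x 1 \<le> m x (ht i) + m (ht i) 1"
      using i x ht_in_unit[of i] by (intro m_subadditive) auto
    also have "m (ht i) 1 \<le> H_real * (1 - ht i)"
      using m_nodes[of i N] i ht_N by simp
    also have "m x (ht i) = weight i * m x' 1"
      using m_hs[OF i(1), of x' 1] x' hs_1[OF i(1)] by simp
    also have "m x' 1 \<le> M + H_real * (1 - x')" using bound[OF x'(1)] by simp
    finally have "m x 1 \<le> weight i * (M + H_real * (1 - x')) + H_real * (1 - ht i)"
      using weight_pos[OF i(1)] by (simp add: mult_left_mono)
    moreover have "x = ht (i - 1) + x' * weight i" using x'(2) hs_eq[OF i(1)] by simp
    moreover have "ht i = ht (i - 1) + weight i" using ht_step[of i] i by simp
    moreover have "weight i * M \<le> max_weight * M"
      using max_weight_bounds(3)[OF i(1)] \<open>0 \<le> M\<close> by (simp add: mult_right_mono)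
    ultimately show "?F x \<le> max_weight * M" by (simp add: algebra_simps)
  qed
  then show ?thesis by simp
qed

lemma m_piece_prefix:
  assumes j: "j \<in> {1..N}" "ht (j - 1) \<le> x" "x \<le> ht j"
  shows "m (ht (j - 1)) x \<le> H_real * (x - ht (j - 1))"
proof -
  obtain x' where x': "x' \<in> {0..1}" "x = hs j x'" using hs_onto_piece[OF j] by auto
  have "m (ht (j - 1)) x = weight j * m 0 x'"
    using m_hs[OF j(1), of 0 x'] x' hs_0[OF j(1)] by simp
  also have "\<dots> \<le> weight j * (H_real * x')"
    using m_prefix[OF x'(1)] weight_pos[OF j(1)] by (simp add: mult_left_mono)
  also have "\<dots> = H_real * (x - ht (j - 1))"
    using x'(2) hs_eq[OF j(1)] by (simp add: algebra_simps)
  finally show ?thesis .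
qed

lemma m_piece_suffix:
  assumes i: "i \<in> {1..N}" "ht (i - 1) \<le> x" "x \<le> ht i"
  shows "m x (ht i) \<le> H_real * (ht i - x)"
proof -
  obtain x' where x': "x' \<in> {0..1}" "x = hs i x'" using hs_onto_piece[OF i] by auto
  have "m x (ht i) = weight i * m x' 1"
    using m_hs[OF i(1), of x' 1] x' hs_1[OF i(1)] by simp
  also have "\<dots> \<le> weight i * (H_real * (1 - x'))"
    using m_suffix[OF x'(1)] weight_pos[OF i(1)] by (simp add: mult_left_mono)
  also have "\<dots> = H_real * (ht i - x)"
    using x'(2) hs_eq[OF i(1)] ht_step[of i] i(1) by (simp add: algebra_simps)
  finally show ?thesis .
qed

lemma m_across_nodes:
  assumes i: "i \<in> {1..N}" "ht (i - 1) \<le> x" "x \<le> ht i"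
    and j: "j \<in> {1..N}" "ht (j - 1) \<le> y" "y \<le> ht j" and "i < j"
  shows "m x y \<le> H_real * (y - x)"
proof -
  have nodes: "ht i \<le> ht (j - 1)" using \<open>i < j\<close> j(1) by (intro ht_mono) auto
  have "ht (i - 1) \<in> {0..1}" using i(1) by (intro ht_in_unit) auto
  moreover have "ht j \<in> {0..1}" using j(1) by (intro ht_in_unit) auto
  ultimately have "0 \<le> x" "y \<le> 1" using i(2) j(3) by auto
  have "m x y \<le> m x (ht i) + m (ht i) y"
    using i(3) nodes j(2) \<open>0 \<le> x\<close> \<open>y \<le> 1\<close> by (intro m_subadditive) auto
  also have "m (ht i) y \<le> m (ht i) (ht (j - 1)) + m (ht (j - 1)) y"
    using nodes j(2) \<open>y \<le> 1\<close> ht_in_unit[of i] i(1) by (intro m_subadditive) auto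
  also have "m (ht i) (ht (j - 1)) \<le> H_real * (ht (j - 1) - ht i)"
    using m_nodes \<open>i < j\<close> j(1) by auto
  finally show ?thesis
    using m_piece_suffix[OF i] m_piece_prefix[OF j] by (simp add: algebra_simps)
qed

lemma m_within_piece:
  assumes i: "i \<in> {1..N}" "ht (i - 1) \<le> x" and "x \<le> y" "y \<le> ht i"
  obtains x' y' where "0 \<le> x'" "x' \<le> y'" "y' \<le> 1"
    and "m x y - H_real * (y - x) = weight i * (m x' y' - H_real * (y' - x'))"
proof -
  obtain x' where x': "x' \<in> {0..1}" "x = hs i x'"
    using hs_onto_piece[OF i(1,2)] assms(3,4) by auto
  obtain y' where y': "y' \<in> {0..1}" "y = hs i y'"
    using hs_onto_piece[OF i(1), of y] i(2) assms(3,4) by auto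
  have "x' \<le> y'" using hs_le_cancel[OF i(1)] x' y' assms(3) by simp
  moreover have "m x y - H_real * (y - x) = weight i * (m x' y' - H_real * (y' - x'))"
    using m_hs[OF i(1), of x' y'] x' y' \<open>x' \<le> y'\<close> hs_eq[OF i(1)] by (simp add: algebra_simps)
  ultimately show ?thesis using that x'(1) y'(1) by auto
qed

text \<open>The defect of an arbitrary interval contracts when both ends lie in one piece;
  otherwise the interval is split at nodes and the prefix and suffix bounds apply.\<close>
lemma m_upper: assumes "0 \<le> u" "u \<le> v" "v \<le> 1" shows "m u v \<le> H_real * (v - u)"
proof -
  let ?X = "{p :: real \<times> real. 0 \<le> fst p \<and> fst p \<le> snd p \<and> snd p \<le> 1}"
  let ?F = "\<lambda>p. m (fst p) (snd p) - H_real * (snd p - fst p)"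
  have "?F (u, v) \<le> 0"
  proof (rule nonpos_if_bounds_contract[of ?X ?F H_real max_weight "(u, v)", OF _ max_weight_bounds(2)])
    show "?F p \<le> H_real" if "p \<in> ?X" for p
      using m_le_H_real[of "fst p" "snd p"] that mult_nonneg_nonneg[OF H_real_nonneg, of "snd p - fst p"]
      by simp
  next
    fix M :: real and p :: "real \<times> real"
    assume bound: "\<And>q. q \<in> ?X \<Longrightarrow> ?F q \<le> M" and "0 \<le> M" and "p \<in> ?X"
    obtain x y where p: "p = (x, y)" "0 \<le> x" "x \<le> y" "y \<le> 1" using \<open>p \<in> ?X\<close> by (cases p) auto
    obtain i where i: "i \<in> {1..N}" "ht (i - 1) \<le> x" "x \<le> ht i"
      using ht_interval_exists[of x] p by auto
    obtain j where j: "j \<in> {1..N}" "ht (j - 1) \<le> y" "y \<le> ht j"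
      using ht_interval_exists[of y] p by auto
    show "?F p \<le> max_weight * M"
    proof (cases "y \<le> ht i")
      case True
      then obtain x' y' where x'y': "0 \<le> x'" "x' \<le> y'" "y' \<le> 1"
        and scaled: "?F p = weight i * ?F (x', y')"
        using m_within_piece[OF i(1,2) \<open>x \<le> y\<close>] p(1) by auto
      have "?F p \<le> weight i * M"
        unfolding scaled using bound[of "(x', y')"] x'y' weight_pos[OF i(1)]
        by (intro mult_left_mono) auto
      also have "\<dots> \<le> max_weight * M"
        using max_weight_bounds(3)[OF i(1)] \<open>0 \<le> M\<close> by (rule mult_right_mono)
      finally show ?thesis .
    next
      case False
      have "i < j"
      proof (rule ccontr)
        assume "\<not> i < j"
        then have "ht j \<le> ht i" using i(1) by (intro ht_mono) auto
        then show False using False j by simp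
      qed
      then have "?F p \<le> 0" using m_across_nodes[OF i j] p by simp
      also have "0 \<le> max_weight * M" using max_weight_bounds(1) \<open>0 \<le> M\<close> by simp
      finally show ?thesis .
    qed
  qed (use assms in auto)
  then show ?thesis by simp
qed

lemma m_lower: assumes "0 \<le> u" "u \<le> v" "v \<le> 1" shows "H_real * (v - u) \<le> m u v"
proof -
  have "H_real \<le> m 0 u + m u 1" using m_subadditive[of 0 u 1] assms m_unit by simp
  also have "m u 1 \<le> m u v + m v 1" using m_subadditive[of u v 1] assms by simp
  finally show ?thesis
    using m_prefix[of u] m_suffix[of v] assms by (simp add: algebra_simps)
qed

lemma \<mu>_finite: assumes "0 \<le> u" "u \<le> v" "v \<le> 1" shows "\<mu> u v = H * ennreal (v - u)"
proof -
  have "m u v = H_real * (v - u)" using m_upper[OF assms] m_lower[OF assms] by linarith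
  then show ?thesis using \<mu>_eq_m[of u v] assms H_eq H_real_nonneg by (simp add: ennreal_mult)
qed

end

lemma \<mu>_interval: "0 \<le> u \<Longrightarrow> u \<le> v \<Longrightarrow> v \<le> 1 \<Longrightarrow> \<mu> u v = H * ennreal (v - u)"
  by (cases "u = v"; cases "H = top") (auto simp: \<mu>_point \<mu>_infinite ennreal_mult_top \<mu>_finite)

end

theorem corollary5p4:
  fixes N :: nat and S :: "nat \<Rightarrow> 'a::euclidean_space \<Rightarrow> 'a" and r :: "nat \<Rightarrow> real"
    and \<gamma> :: "'a set" and a b :: 'a and s :: real and \<phi> :: "real \<Rightarrow> 'a"
  assumes "IFS_quasiarc N S r \<gamma> a b"
    and "similarity_dimension N r s"
    and "hutchinson_param N S r s a b \<phi>"
  shows "\<forall>u\<in>{0..1}. \<forall>v\<in>{0..1}. u \<le> v \<longrightarrow>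
           hausdorff_measure s (\<phi> ` {u..v}) = hausdorff_measure s \<gamma> * ennreal \<bar>u - v\<bar>"
proof -
  interpret hutchinson_path N S r \<gamma> a b s \<phi>
    using assms by unfold_locales (auto simp: IFS_quasiarc_def IFS_arc_def)
  show ?thesis using \<mu>_interval unfolding \<mu>_def by auto
qed

end
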